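(* Let $h:\{0,1\}^n\to\{\pm1\}$ be such that $(1-h)/2$ is monotone. Then for every $0\le r\le n-1$, $\mu(h|_{r+1})\ge\mu(h|_r)+\frac1n\mathbf I[h|_r]$, and consequently $\frac1n\sum_{r=0}^{n-1}\mathbf I[h|_r]\le\mu(h|_n)-\mu(h|_0)\le1$.
   Context: A function $g:\{0,1\}^n\to\{0,1\}$ is monotone if $x\preceq y$ coordinatewise implies $g(x)\le g(y)$. For $0\le r\le n$, $\binom{[n]}{r}=\{x\in\{0,1\}^n:\sum_ix_i=r\}$ with the uniform distribution; $h|_r$ is the restriction of $h$ to it, and $\mu(h|_r)=|\{x\in\binom{[n]}{r}:h(x)=-1\}|/\binom nr$. For $g:\binom{[n]}{r}\to\{\pm1\}$, $\mathbf I_{ij}[g]=2\Pr_x[g(x^{(i,j)})\ne g(x)]$ with $x^{(i,j)}$ obtained by swapping coordinates $i,j$, and $\mathbf I[g]=\frac1n\sum_{1\le i<j\le n}\mathbf I_{ij}[g]$. *)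

theory Defs
  imports Complex_Main
begin

text \<open>Points of the cube {0,1}^n are encoded as functions nat => bool that are
  False outside the coordinates 0..n-1 (True = 1).\<close>

definition cube :: "nat \<Rightarrow> (nat \<Rightarrow> bool) set" where
  "cube n = {x. \<forall>i. n \<le> i \<longrightarrow> \<not> x i}"

definition slice :: "nat \<Rightarrow> nat \<Rightarrow> (nat \<Rightarrow> bool) set" where
  "slice n r = {x \<in> cube n. card {i. i < n \<and> x i} = r}"

definition monotone_bool :: "nat \<Rightarrow> ((nat \<Rightarrow> bool) \<Rightarrow> real) \<Rightarrow> bool" where
  "monotone_bool n g \<longleftrightarrow>
     (\<forall>x\<in>cube n. \<forall>y\<in>cube n. (\<forall>i<n. x i \<longrightarrow> y i) \<longrightarrow> g x \<le> g y)"

definition slice_mu :: "nat \<Rightarrow> ((nat \<Rightarrow> bool) \<Rightarrow> real) \<Rightarrow> nat \<Rightarrow> real" where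
  "slice_mu n h r = real (card {x \<in> slice n r. h x = -1}) / real (n choose r)"

definition swap_coords :: "nat \<Rightarrow> nat \<Rightarrow> (nat \<Rightarrow> bool) \<Rightarrow> (nat \<Rightarrow> bool)" where
  "swap_coords i j x = x(i := x j, j := x i)"

definition slice_infl_ij :: "nat \<Rightarrow> ((nat \<Rightarrow> bool) \<Rightarrow> real) \<Rightarrow> nat \<Rightarrow> nat \<Rightarrow> nat \<Rightarrow> real" where
  "slice_infl_ij n h r i j =
     2 * real (card {x \<in> slice n r. h (swap_coords i j x) \<noteq> h x}) / real (card (slice n r))"

text \<open>I[h|_r] = (1/n) sum_{1<=i<j<=n} I_ij[h|_r] (coordinates indexed 0..n-1 here)\<close>
definition slice_infl :: "nat \<Rightarrow> ((nat \<Rightarrow> bool) \<Rightarrow> real) \<Rightarrow> nat \<Rightarrow> real" where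
  "slice_infl n h r = (1 / real n) * (\<Sum>j<n. \<Sum>i<j. slice_infl_ij n h r i j)"

end

theory Submission
  imports Defs "HOL-Combinatorics.Transposition"
begin

text \<open>Monotonicity makes \<open>F = {h = -1}\<close> an up-set. Among the edges from slice \<open>r\<close> to slice
  \<open>r + 1\<close> ending in \<open>F\<close>, which number \<open>(r + 1) |F \<inter> slice (r + 1)|\<close>, exactly
  \<open>(n - r) |F \<inter> slice r|\<close> start in \<open>F\<close>; the remaining \<open>B\<close> boundary edges give
  \<open>\<mu>(r + 1) - \<mu>(r) = B / ((n - r) (n choose r))\<close>. If swapping coordinates \<open>i, j\<close> with
  \<open>x i = 1, x j = 0\<close> moves \<open>x \<notin> F\<close> into \<open>F\<close>, then so does raising coordinate \<open>j\<close>, because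
  the raised point dominates the swapped one. Charging the swap to the boundary edge \<open>(x, j)\<close>
  and the 1-coordinate \<open>i\<close> of \<open>x\<close> shows \<open>n (n choose r) I[h|r] / 4 \<le> r B\<close>, and
  \<open>4 r (n - r) \<le> n\<^sup>2\<close> gives the step inequality; summing over \<open>r\<close> telescopes.\<close>

lemma card_Sigma_const:
  assumes "finite A" "\<And>a. a \<in> A \<Longrightarrow> finite (B a) \<and> card (B a) = k"
  shows "card (Sigma A B) = k * card A"
  using assms by (simp add: card_SigmaI cong: sum.cong)

lemma four_mult_le_sum_square: "4 * a * b \<le> (a + b)\<^sup>2" for a b :: real
proof -
  have "0 \<le> (a - b)\<^sup>2" by simp
  then show ?thesis by (simp add: power2_eq_square algebra_simps)
qed

lemma bij_betw_slice_subsets: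
  "bij_betw (\<lambda>x. {i. i < n \<and> x i}) (slice n r) {A. A \<subseteq> {..<n} \<and> card A = r}"
proof (rule bij_betw_byWitness[where f' = "\<lambda>A i. i \<in> A"])
  show "\<forall>x\<in>slice n r. (\<lambda>i. i \<in> {i. i < n \<and> x i}) = x"
    by (auto simp: slice_def cube_def fun_eq_iff, meson not_le)
  show "\<forall>A\<in>{A. A \<subseteq> {..<n} \<and> card A = r}. {i. i < n \<and> i \<in> A} = A"
    by auto
  show "(\<lambda>A i. i \<in> A) ` {A. A \<subseteq> {..<n} \<and> card A = r} \<subseteq> slice n r"
    by (auto simp: slice_def cube_def Int_absorb1 Collect_conj_eq[symmetric] intro!: arg_cong[where f = card])
qed (auto simp: slice_def)

lemma finite_slice: "finite (slice n r)"
  using bij_betw_finite[OF bij_betw_slice_subsets, of n r]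
  by (auto intro: finite_subset[of _ "Pow {..<n}"])

lemma card_slice: "card (slice n r) = n choose r"
  using bij_betw_same_card[OF bij_betw_slice_subsets] n_subsets[of "{..<n}" r] by simp

lemma slice_subset_cube: "slice n r \<subseteq> cube n"
  by (auto simp: slice_def)

lemma card_ones_slice: "x \<in> slice n r \<Longrightarrow> card {i. i < n \<and> x i} = r"
  by (simp add: slice_def)

lemma card_zeros_slice:
  assumes "x \<in> slice n r" shows "card {i. i < n \<and> \<not> x i} = n - r"
proof -
  have "{i. i < n \<and> \<not> x i} = {..<n} - {i. i < n \<and> x i}" by auto
  then show ?thesis
    using assms card_Diff_subset[of "{i. i < n \<and> x i}" "{..<n}"] by (auto simp: slice_def)
qed

lemma swap_coords_swap_coords [simp]: "swap_coords i j (swap_coords i j x) = x"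
  by (auto simp: swap_coords_def)

lemma swap_coords_eq_self_iff: "swap_coords i j x = x \<longleftrightarrow> x i = x j"
  by (auto simp: swap_coords_def fun_eq_iff)

lemma swap_coords_commute: "swap_coords i j = swap_coords j i"
  by (auto simp: swap_coords_def fun_eq_iff)

lemma swap_coords_in_slice:
  assumes "i < n" "j < n" "x \<in> slice n r"
  shows "swap_coords i j x \<in> slice n r"
proof -
  have "swap_coords i j x = x \<circ> transpose i j"
    by (auto simp: swap_coords_def fun_eq_iff transpose_def)
  moreover have "{k. k < n \<and> (x \<circ> transpose i j) k} = transpose i j ` {k. k < n \<and> x k}"
    using assms(1,2) by (auto simp: in_transpose_image_iff transpose_def)
  ultimately show ?thesis
    using assms by (auto simp: slice_def cube_def card_image swap_coords_def)
qed

lemma set_bit_in_slice: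
  assumes "x \<in> slice n r" "a < n" "\<not> x a"
  shows "x(a := True) \<in> slice n (Suc r)"
proof -
  have "{i. i < n \<and> (x(a := True)) i} = insert a {i. i < n \<and> x i}" using assms by auto
  then show ?thesis using assms by (auto simp: slice_def cube_def)
qed

lemma clear_bit_in_slice:
  assumes "y \<in> slice n (Suc r)" "a < n" "y a"
  shows "y(a := False) \<in> slice n r"
proof -
  have "{i. i < n \<and> y i} = insert a {i. i < n \<and> (y(a := False)) i}" using assms by auto
  then show ?thesis using assms by (auto simp: slice_def cube_def)
qed

definition up_closed :: "nat \<Rightarrow> (nat \<Rightarrow> bool) set \<Rightarrow> bool" where
  "up_closed n F \<longleftrightarrow>
     (\<forall>x\<in>cube n. \<forall>y\<in>cube n. x \<in> F \<longrightarrow> (\<forall>i<n. x i \<longrightarrow> y i) \<longrightarrow> y \<in> F)"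

lemma up_closedD:
  assumes "up_closed n F" "x \<in> F" "x \<in> cube n" "y \<in> cube n" "\<forall>i<n. x i \<longrightarrow> y i"
  shows "y \<in> F"
  using assms unfolding up_closed_def by blast

lemma up_closed_if_monotone_bool:
  assumes "\<forall>x\<in>cube n. h x = 1 \<or> h x = -1" and "monotone_bool n (\<lambda>x. (1 - h x) / 2)"
  shows "up_closed n {x. h x = -1}"
  unfolding up_closed_def
proof (intro ballI impI, simp only: mem_Collect_eq)
  fix x y assume x: "x \<in> cube n" and y: "y \<in> cube n"
    and hx: "h x = -1" and le: "\<forall>i<n. x i \<longrightarrow> y i"
  have "(1 - h x) / 2 \<le> (1 - h y) / 2"
    using assms(2) x y le unfolding monotone_bool_def by blast
  then show "h y = -1" using hx assms(1) y by force
qed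

definition up_boundary :: "nat \<Rightarrow> (nat \<Rightarrow> bool) set \<Rightarrow> nat \<Rightarrow> ((nat \<Rightarrow> bool) \<times> nat) set" where
  "up_boundary n F r = {(x, a). x \<in> slice n r \<and> a < n \<and> \<not> x a \<and> x \<notin> F \<and> x(a := True) \<in> F}"

definition swap_boundary :: "nat \<Rightarrow> (nat \<Rightarrow> bool) set \<Rightarrow> nat \<Rightarrow> nat \<Rightarrow> nat \<Rightarrow> (nat \<Rightarrow> bool) set" where
  "swap_boundary n F r i j = {x \<in> slice n r. x \<notin> F \<and> swap_coords i j x \<in> F}"

lemma finite_up_boundary: "finite (up_boundary n F r)"
  by (rule finite_subset[of _ "slice n r \<times> {..<n}"]) (auto simp: up_boundary_def finite_slice)

lemma card_up_edges_into:
  "card {(x, a). x \<in> slice n r \<and> a < n \<and> \<not> x a \<and> x(a := True) \<in> F}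
     = Suc r * card (slice n (Suc r) \<inter> F)"
proof -
  let ?E = "{(x, a). x \<in> slice n r \<and> a < n \<and> \<not> x a \<and> x(a := True) \<in> F}"
  let ?D = "Sigma (slice n (Suc r) \<inter> F) (\<lambda>y. {a. a < n \<and> y a})"
  have "bij_betw (\<lambda>(x, a). (x(a := True), a)) ?E ?D"
    by (rule bij_betw_byWitness[where f' = "\<lambda>(y, a). (y(a := False), a)"])
       (auto simp: set_bit_in_slice clear_bit_in_slice fun_upd_idem)
  then have "card ?E = card ?D" by (rule bij_betw_same_card)
  also have "\<dots> = Suc r * card (slice n (Suc r) \<inter> F)"
    by (rule card_Sigma_const) (auto simp: finite_slice card_ones_slice)
  finally show ?thesis .
qed

lemma card_up_boundary:
  assumes "up_closed n F"
  shows "card (up_boundary n F r) + (n - r) * card (slice n r \<inter> F)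
           = Suc r * card (slice n (Suc r) \<inter> F)"
proof -
  let ?E = "{(x, a). x \<in> slice n r \<and> a < n \<and> \<not> x a \<and> x(a := True) \<in> F}"
  let ?Z = "Sigma (slice n r \<inter> F) (\<lambda>x. {a. a < n \<and> \<not> x a})"
  have "?Z \<subseteq> ?E"
  proof clarify
    fix x a assume x: "x \<in> slice n r" "x \<in> F" and a: "a < n" "\<not> x a"
    have "x(a := True) \<in> slice n (Suc r)" using set_bit_in_slice x a by blast
    then have "x \<in> cube n" "x(a := True) \<in> cube n" using x(1) slice_subset_cube by blast+
    then show "x(a := True) \<in> F" by (rule up_closedD[OF assms x(2)]) simp
  qed
  then have "?E = up_boundary n F r \<union> ?Z" by (auto simp: up_boundary_def)
  moreover have "up_boundary n F r \<inter> ?Z = {}" by (auto simp: up_boundary_def)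
  moreover have "card ?Z = (n - r) * card (slice n r \<inter> F)"
    by (rule card_Sigma_const) (auto simp: finite_slice card_zeros_slice)
  moreover have "finite ?Z" by (simp add: finite_slice)
  ultimately show ?thesis
    using card_up_edges_into[of n r F] finite_up_boundary[of n F r] by (simp add: card_Un_disjoint)
qed

lemma swap_boundary_commute: "swap_boundary n F r i j = swap_boundary n F r j i"
  by (simp add: swap_boundary_def swap_coords_commute)

lemma swap_boundary_coords_differ: "x \<in> swap_boundary n F r i j \<Longrightarrow> x i \<noteq> x j"
  by (auto simp: swap_boundary_def swap_coords_eq_self_iff[symmetric])

lemma swap_boundary_imp_up_boundary:
  assumes "up_closed n F" "i < n" "j < n" "x \<in> swap_boundary n F r i j" "x i"
  shows "(x, j) \<in> up_boundary n F r"
proof -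
  have x: "x \<in> slice n r" "x \<notin> F" "swap_coords i j x \<in> F" and "\<not> x j"
    using assms(4,5) swap_boundary_coords_differ[OF assms(4)] by (auto simp: swap_boundary_def)
  have "x(j := True) \<in> slice n (Suc r)" using set_bit_in_slice x(1) assms(3) \<open>\<not> x j\<close> .
  moreover have "swap_coords i j x \<in> slice n r" using swap_coords_in_slice assms(2,3) x(1) .
  ultimately have "swap_coords i j x \<in> cube n" "x(j := True) \<in> cube n"
    using slice_subset_cube by blast+
  then have "x(j := True) \<in> F" \<comment> \<open>\<open>x(j := True)\<close> dominates \<open>swap_coords i j x\<close>\<close>
    by (rule up_closedD[OF assms(1) x(3)]) (simp add: swap_coords_def assms(5))
  then show ?thesis using x assms(3) \<open>\<not> x j\<close> by (simp add: up_boundary_def)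
qed

lemma sum_card_swap_boundary_le:
  assumes "up_closed n F"
  shows "(\<Sum>j<n. \<Sum>i<j. card (swap_boundary n F r i j)) \<le> r * card (up_boundary n F r)"
proof -
  let ?S = "Sigma {..<n} (\<lambda>j. Sigma {..<j} (\<lambda>i. swap_boundary n F r i j))"
  let ?T = "Sigma (up_boundary n F r) (\<lambda>(x, a). {b. b < n \<and> x b})"
  define g :: "nat \<times> nat \<times> (nat \<Rightarrow> bool) \<Rightarrow> ((nat \<Rightarrow> bool) \<times> nat) \<times> nat"
    where "g = (\<lambda>(j, i, x). if x i then ((x, j), i) else ((x, i), j))"
  have "g (j, i, x) \<in> ?T" if ij: "j < n" "i < j" and x: "x \<in> swap_boundary n F r i j" for j i x
  proof (cases "x i")
    case True
    then show ?thesis using swap_boundary_imp_up_boundary[OF assms _ ij(1) x] ij by (simp add: g_def)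
  next
    case False
    then have "x j" using swap_boundary_coords_differ[OF x] by simp
    moreover have "x \<in> swap_boundary n F r j i" using x swap_boundary_commute by blast
    ultimately have "(x, i) \<in> up_boundary n F r"
      using swap_boundary_imp_up_boundary[OF assms ij(1)] ij by simp
    then show ?thesis using False \<open>x j\<close> ij by (simp add: g_def)
  qed
  then have "g ` ?S \<subseteq> ?T" by (intro image_subsetI) auto
  moreover have "inj_on g ?S"
    by (rule inj_onI) (auto simp: g_def split: if_splits dest: swap_boundary_coords_differ)
  moreover have "finite ?T" by (simp add: finite_up_boundary split_def)
  ultimately have "card ?S \<le> card ?T" by (intro card_inj_on_le)
  moreover have "card ?S = (\<Sum>j<n. \<Sum>i<j. card (swap_boundary n F r i j))"
    by (simp add: swap_boundary_def finite_slice)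
  moreover have "card ?T = r * card (up_boundary n F r)"
    by (rule card_Sigma_const[OF finite_up_boundary]) (auto simp: up_boundary_def card_ones_slice)
  ultimately show ?thesis by simp
qed

lemma card_swap_disagree:
  assumes pm1: "\<forall>x\<in>cube n. h x = 1 \<or> h x = -1" and "i < n" "j < n"
  shows "card {x \<in> slice n r. h (swap_coords i j x) \<noteq> h x}
           = 2 * card (swap_boundary n {x. h x = -1} r i j)"
proof -
  let ?A = "swap_boundary n {x. h x = -1} r i j"
  let ?B = "{x \<in> slice n r. h x = -1 \<and> h (swap_coords i j x) \<noteq> -1}"
  have swap_in: "x \<in> slice n r \<Longrightarrow> swap_coords i j x \<in> slice n r" for x
    using swap_coords_in_slice assms(2,3) by blast
  have pm: "x \<in> slice n r \<Longrightarrow> h x = 1 \<or> h x = -1" for x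
    using pm1 slice_subset_cube by blast
  have "bij_betw (swap_coords i j) ?A ?B"
    by (rule bij_betw_byWitness[where f' = "swap_coords i j"]) (auto simp: swap_boundary_def swap_in)
  then have card_eq: "card ?B = card ?A" by (simp add: bij_betw_same_card)
  have "{x \<in> slice n r. h (swap_coords i j x) \<noteq> h x} = ?A \<union> ?B"
    using pm swap_in by (auto simp: swap_boundary_def) metis
  moreover have "?A \<inter> ?B = {}" by (auto simp: swap_boundary_def)
  ultimately show ?thesis
    using card_eq by (simp add: card_Un_disjoint finite_slice swap_boundary_def)
qed

lemma slice_infl_eq:
  assumes "\<forall>x\<in>cube n. h x = 1 \<or> h x = -1"
  shows "slice_infl n h r = 4 * real (\<Sum>j<n. \<Sum>i<j. card (swap_boundary n {x. h x = -1} r i j))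
                                 / (real n * real (n choose r))"
proof -
  have "slice_infl_ij n h r i j = 4 * real (card (swap_boundary n {x. h x = -1} r i j)) / real (n choose r)"
    if "i < j" "j < n" for i j
    using card_swap_disagree[OF assms, of i j r] that by (simp add: slice_infl_ij_def card_slice)
  then show ?thesis
    by (simp add: slice_infl_def sum_divide_distrib sum_distrib_left)
qed

lemma slice_mu_nonneg: "0 \<le> slice_mu n h r"
  by (simp add: slice_mu_def)

lemma slice_mu_le_one: "slice_mu n h r \<le> 1"
proof -
  have "card {x \<in> slice n r. h x = -1} \<le> n choose r"
    unfolding card_slice[symmetric] by (rule card_mono[OF finite_slice]) auto
  then show ?thesis by (auto simp: slice_mu_def divide_le_eq_1)
qed

lemma slice_mu_Suc_eq:
  assumes "up_closed n {x. h x = -1}" "r < n"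
  shows "slice_mu n h (Suc r)
           = slice_mu n h r + real (card (up_boundary n {x. h x = -1} r)) / (real (n - r) * real (n choose r))"
proof -
  let ?F = "{x. h x = -1}"
  let ?B = "real (card (up_boundary n ?F r))"
  let ?A0 = "real (card (slice n r \<inter> ?F))" and ?A1 = "real (card (slice n (Suc r) \<inter> ?F))"
  have mu: "slice_mu n h k = real (card (slice n k \<inter> ?F)) / real (n choose k)" for k
    by (simp add: slice_mu_def Int_def)
  have choose: "real (Suc r) * real (n choose Suc r) = real (n - r) * real (n choose r)"
    by (metis binomial_absorb_comp binomial_absorption of_nat_mult)
  have count: "real (Suc r) * ?A1 = ?B + real (n - r) * ?A0"
    using card_up_boundary[OF assms(1), of r] by (metis of_nat_add of_nat_mult)
  have "slice_mu n h (Suc r) = real (Suc r) * ?A1 / (real (Suc r) * real (n choose Suc r))"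
    unfolding mu by simp
  also have "\<dots> = (?B + real (n - r) * ?A0) / (real (n - r) * real (n choose r))"
    unfolding count choose ..
  also have "\<dots> = slice_mu n h r + ?B / (real (n - r) * real (n choose r))"
    using assms(2) unfolding mu by (simp add: add_divide_distrib)
  finally show ?thesis .
qed

lemma slice_mu_step:
  assumes pm1: "\<forall>x\<in>cube n. h x = 1 \<or> h x = -1"
    and up_F: "up_closed n {x. h x = -1}" and "r < n"
  shows "slice_mu n h (r + 1) \<ge> slice_mu n h r + (1 / real n) * slice_infl n h r"
proof -
  define F where "F = {x. h x = -1}"
  define B where "B = real (card (up_boundary n F r))"
  define D where "D = real (\<Sum>j<n. \<Sum>i<j. card (swap_boundary n F r i j))"
  define C where "C = real (n choose r)"
  have up: "up_closed n F" unfolding F_def by (rule up_F)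
  have "D \<le> real r * B"
    unfolding B_def D_def using sum_card_swap_boundary_le[OF up, of r] by (metis of_nat_mono of_nat_mult)
  then have "4 * D * real (n - r) \<le> 4 * (real r * B) * real (n - r)"
    by (intro mult_right_mono) simp_all
  also have "\<dots> = (4 * real r * real (n - r)) * B" by (simp add: ac_simps)
  also have "\<dots> \<le> (real r + real (n - r))\<^sup>2 * B"
    by (intro mult_right_mono four_mult_le_sum_square) (simp add: B_def)
  also have "\<dots> = real n ^ 2 * B" using assms(3) by simp
  finally have "4 * D * real (n - r) / (real n ^ 2 * real (n - r) * C)
             \<le> real n ^ 2 * B / (real n ^ 2 * real (n - r) * C)"
    by (rule divide_right_mono) (simp add: C_def)
  moreover have "real n > 0" "real (n - r) > 0" "C > 0" using assms(3) by (simp_all add: C_def)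
  ultimately have "(1 / real n) * (4 * D / (real n * C)) \<le> B / (real (n - r) * C)"
    by (simp add: power2_eq_square)
  moreover have "slice_infl n h r = 4 * D / (real n * C)"
    using slice_infl_eq[OF pm1, of r] by (simp add: D_def C_def F_def)
  ultimately have "slice_mu n h r + (1 / real n) * slice_infl n h r
                     \<le> slice_mu n h r + B / (real (n - r) * C)"
    by simp
  also have "\<dots> = slice_mu n h (r + 1)"
    using slice_mu_Suc_eq[OF up_F assms(3)] by (simp add: B_def C_def F_def)
  finally show ?thesis .
qed

theorem mainTheorem6:
  fixes n :: nat and h :: "(nat \<Rightarrow> bool) \<Rightarrow> real"
  assumes pm1: "\<forall>x\<in>cube n. h x = 1 \<or> h x = -1"
    and mono: "monotone_bool n (\<lambda>x. (1 - h x) / 2)"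
  shows "(\<forall>r<n. slice_mu n h (r + 1) \<ge> slice_mu n h r + (1 / real n) * slice_infl n h r)
    \<and> (1 / real n) * (\<Sum>r<n. slice_infl n h r) \<le> slice_mu n h n - slice_mu n h 0
    \<and> slice_mu n h n - slice_mu n h 0 \<le> 1"
proof -
  have step: "\<forall>r<n. slice_mu n h (r + 1) \<ge> slice_mu n h r + (1 / real n) * slice_infl n h r"
    using slice_mu_step[OF pm1 up_closed_if_monotone_bool[OF pm1 mono]] by blast
  have "(1 / real n) * (\<Sum>r<n. slice_infl n h r) = (\<Sum>r<n. (1 / real n) * slice_infl n h r)"
    by (simp add: sum_distrib_left)
  also have "\<dots> \<le> (\<Sum>r<n. slice_mu n h (Suc r) - slice_mu n h r)"
    by (rule sum_mono) (use step in auto)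
  also have "\<dots> = slice_mu n h n - slice_mu n h 0"
    by (rule sum_lessThan_telescope)
  finally have "(1 / real n) * (\<Sum>r<n. slice_infl n h r) \<le> slice_mu n h n - slice_mu n h 0" .
  moreover have "slice_mu n h n - slice_mu n h 0 \<le> 1"
    using slice_mu_le_one[of n h n] slice_mu_nonneg[of n h 0] by linarith
  ultimately show ?thesis using step by blast
qed

end
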